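(* The set $\{\gamma(w): w \text{ a nanoword over }\alpha\}$ is equal to the commutator subgroup $[\Pi,\Pi]$ of $\Pi$.
   Context: Fix a set $\alpha$ with an involution $\tau$. A nanoword over $\alpha$ is a pair $(\mathcal A,w)$ with $\mathcal A$ a finite set with a map $A\mapsto|A|\in\alpha$ and $w:\{1,\dots,n\}\to\mathcal A$ a word in which each letter of $\mathcal A$ occurs exactly twice. Let $\Pi$ be the group with generators $\{z_a\}_{a\in\alpha}$ and defining relations $z_az_{\tau(a)}=1$ for $a\in\alpha$. For a nanoword $(\mathcal A,w)$ of length $n$ and $i=1,\dots,n$ set $\gamma_i=z_{|w(i)|}$ if position $i$ is the first occurrence of the letter $w(i)$ in $w$, and $\gamma_i=z_{\tau(|w(i)|)}=z_{|w(i)|}^{-1}$ otherwise; put $\gamma(w)=\gamma_1\cdots\gamma_n\in\Pi$ (with $\gamma$ of the empty nanoword equal to $1$). *)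

theory Defs
  imports "HOL-Algebra.Generated_Groups"
begin

text \<open>The group Pi with generators z_a (a in alpha) and relations z_a z_(tau a) = 1,
  presented as words over alpha modulo the congruence generated by cancelling
  an adjacent pair  a (tau a).  (Since tau is an involution, this monoid
  presentation defines the same group as the group presentation.)\<close>

definition pi_red :: "('a \<Rightarrow> 'a) \<Rightarrow> ('a list \<times> 'a list) set" where
  "pi_red tau = {(u @ [a, tau a] @ v, u @ v) | u a v. True}"

definition pi_eqv :: "('a \<Rightarrow> 'a) \<Rightarrow> ('a list \<times> 'a list) set" where
  "pi_eqv tau = (pi_red tau \<union> (pi_red tau)\<inverse>)\<^sup>*"

definition Pi_grp :: "('a \<Rightarrow> 'a) \<Rightarrow> 'a list set monoid" where
  "Pi_grp tau =
     \<lparr> carrier = UNIV // pi_eqv tau,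
       mult = (\<lambda>X Y. \<Union>x\<in>X. \<Union>y\<in>Y. pi_eqv tau `` {x @ y}),
       one = pi_eqv tau `` {[]} \<rparr>"

text \<open>A nanoword: letters are natural numbers, lab assigns to each letter its
  projection |A| in alpha, and every letter occurring in w occurs exactly twice.\<close>

definition is_nanoword :: "nat list \<Rightarrow> bool" where
  "is_nanoword w \<longleftrightarrow> (\<forall>x\<in>set w. count_list w x = 2)"

definition gamma_seq :: "('a \<Rightarrow> 'a) \<Rightarrow> (nat \<Rightarrow> 'a) \<Rightarrow> nat list \<Rightarrow> 'a list" where
  "gamma_seq tau lab w =
     map (\<lambda>i. if w ! i \<in> set (take i w) then tau (lab (w ! i)) else lab (w ! i))
         [0..<length w]"

definition gamma :: "('a \<Rightarrow> 'a) \<Rightarrow> (nat \<Rightarrow> 'a) \<Rightarrow> nat list \<Rightarrow> 'a list set" where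
  "gamma tau lab w = pi_eqv tau `` {gamma_seq tau lab w}"

end

theory Submission
  imports Defs
begin

text \<open>The gamma-sequences of nanowords are exactly the balanced words: those obtained from the
  empty word by repeatedly inserting a letter a and, somewhere after it, tau a (delete the two
  occurrences of the first letter of a nanoword, or add a fresh letter twice).  Inserting a and
  a\<inverse> into a word x = p q r multiplies its class by p [a, q] p\<inverse>, which lies in the derived
  subgroup, so balanced words represent commutators.  Conversely, balanced words are closed
  under concatenation and formal inversion and contain every commutator word
  u v u\<inverse> v\<inverse>, so their classes form a subgroup containing all commutators.\<close>

definition pi_class :: "('a \<Rightarrow> 'a) \<Rightarrow> 'a list \<Rightarrow> 'a list set" where
  "pi_class tau s = pi_eqv tau `` {s}"

definition word_inv :: "('a \<Rightarrow> 'a) \<Rightarrow> 'a list \<Rightarrow> 'a list" where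
  "word_inv tau s = rev (map tau s)"

lemma word_inv_append: "word_inv tau (s @ t) = word_inv tau t @ word_inv tau s"
  by (simp add: word_inv_def)

lemma word_inv_Cons: "word_inv tau (a # s) = word_inv tau s @ [tau a]"
  by (simp add: word_inv_def)

lemma equiv_pi_eqv: "equiv UNIV (pi_eqv tau)"
  unfolding pi_eqv_def
proof (rule equivI)
  show "sym ((pi_red tau \<union> (pi_red tau)\<inverse>)\<^sup>*)"
    unfolding sym_def by (metis converse_Un converse_converse rtrancl_converseI sup_commute)
qed (auto simp: refl_on_def trans_def intro: rtrancl_trans)

lemma pi_eqv_trans: "(s, t) \<in> pi_eqv tau \<Longrightarrow> (t, u) \<in> pi_eqv tau \<Longrightarrow> (s, u) \<in> pi_eqv tau"
  using equiv_pi_eqv[of tau] unfolding equiv_def trans_def by blast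

lemma pi_eqv_cancel: "(p @ [a, tau a] @ q, p @ q) \<in> pi_eqv tau"
  unfolding pi_eqv_def pi_red_def by blast

lemma pi_eqv_context:
  assumes "(s, t) \<in> pi_eqv tau"
  shows "(p @ s @ q, p @ t @ q) \<in> pi_eqv tau"
proof -
  have red: "(p @ s @ q, p @ t @ q) \<in> pi_red tau" if "(s, t) \<in> pi_red tau" for s t
    using that unfolding pi_red_def by auto (metis append.assoc append_Cons)
  from assms show ?thesis
    unfolding pi_eqv_def
    by (induction rule: rtrancl_induct) (blast intro: rtrancl_into_rtrancl dest: red)+
qed

lemma pi_eqv_append:
  assumes "(s, s') \<in> pi_eqv tau" "(t, t') \<in> pi_eqv tau"
  shows "(s @ t, s' @ t') \<in> pi_eqv tau"
  using pi_eqv_context[OF assms(1), of "[]" t] pi_eqv_context[OF assms(2), of s' "[]"]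
  by (auto intro: pi_eqv_trans)

lemma pi_class_eq_iff: "pi_class tau s = pi_class tau t \<longleftrightarrow> (s, t) \<in> pi_eqv tau"
  unfolding pi_class_def using eq_equiv_class_iff[OF equiv_pi_eqv] by blast

lemma carrier_Pi_grp: "carrier (Pi_grp tau) = range (pi_class tau)"
  unfolding Pi_grp_def pi_class_def quotient_def by auto

lemma one_Pi_grp: "\<one>\<^bsub>Pi_grp tau\<^esub> = pi_class tau []"
  unfolding Pi_grp_def pi_class_def by simp

lemma mult_Pi_grp: "pi_class tau s \<otimes>\<^bsub>Pi_grp tau\<^esub> pi_class tau t = pi_class tau (s @ t)"
proof -
  have "pi_eqv tau `` {x @ y} = pi_class tau (s @ t)"
    if "x \<in> pi_class tau s" "y \<in> pi_class tau t" for x y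
    using that pi_eqv_append[of s x tau t y]
    by (metis pi_class_def pi_class_eq_iff Image_singleton_iff)
  moreover have "s \<in> pi_class tau s" "t \<in> pi_class tau t"
    using equiv_pi_eqv[of tau] by (auto simp: pi_class_def equiv_def refl_on_def)
  ultimately show ?thesis
    unfolding Pi_grp_def by (auto simp del: Image_singleton_iff)
qed

locale involution =
  fixes tau :: "'a \<Rightarrow> 'a"
  assumes tau_tau [simp]: "tau (tau a) = a"
begin

lemma word_inv_word_inv [simp]: "word_inv tau (word_inv tau s) = s"
  by (simp add: word_inv_def rev_map map_idI)

lemma word_inv_cancel: "(word_inv tau s @ s, []) \<in> pi_eqv tau"
proof (induction s)
  case Nil
  show ?case by (simp add: word_inv_def pi_eqv_def)
next
  case (Cons a s)
  have "(word_inv tau s @ [tau a, tau (tau a)] @ s, word_inv tau s @ s) \<in> pi_eqv tau"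
    by (rule pi_eqv_cancel)
  with Cons.IH show ?case
    by (auto simp: word_inv_Cons intro: pi_eqv_trans)
qed

lemma group_Pi_grp: "group (Pi_grp tau)"
proof (rule groupI)
  fix x assume "x \<in> carrier (Pi_grp tau)"
  then obtain s where "x = pi_class tau s" by (auto simp: carrier_Pi_grp)
  then show "\<exists>y\<in>carrier (Pi_grp tau). y \<otimes>\<^bsub>Pi_grp tau\<^esub> x = \<one>\<^bsub>Pi_grp tau\<^esub>"
    by (intro bexI[of _ "pi_class tau (word_inv tau s)"])
       (auto simp: mult_Pi_grp one_Pi_grp pi_class_eq_iff word_inv_cancel carrier_Pi_grp)
qed (auto simp: carrier_Pi_grp mult_Pi_grp one_Pi_grp)

lemma inv_Pi_grp: "inv\<^bsub>Pi_grp tau\<^esub> (pi_class tau s) = pi_class tau (word_inv tau s)"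
proof -
  interpret group "Pi_grp tau" by (rule group_Pi_grp)
  show ?thesis
    by (rule inv_equality)
       (auto simp: mult_Pi_grp one_Pi_grp pi_class_eq_iff word_inv_cancel carrier_Pi_grp)
qed

end

inductive balanced :: "('a \<Rightarrow> 'a) \<Rightarrow> 'a list \<Rightarrow> bool" for tau where
  Nil: "balanced tau []"
| insert: "balanced tau (p @ q @ r) \<Longrightarrow> balanced tau (p @ a # q @ tau a # r)"

lemma balanced_append:
  assumes "balanced tau s" "balanced tau t"
  shows "balanced tau (s @ t)"
  using assms(2)
proof (induction t rule: balanced.induct)
  case (insert p q r a)
  then show ?case using balanced.insert[of tau "s @ p" q r a] by simp
qed (simp add: assms(1))

lemma balanced_insert_word:
  "balanced tau (p @ q @ r) \<Longrightarrow> balanced tau (p @ u @ q @ word_inv tau u @ r)"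
proof (induction u arbitrary: q)
  case (Cons a u)
  then have "balanced tau (p @ u @ q @ word_inv tau u @ r)" by blast
  then have "balanced tau (p @ a # (u @ q @ word_inv tau u) @ tau a # r)"
    using balanced.insert[of tau p "u @ q @ word_inv tau u" r a] by simp
  then show ?case by (simp add: word_inv_Cons)
qed (simp add: word_inv_def)

lemma balanced_commutator: "balanced tau (u @ v @ word_inv tau u @ word_inv tau v)"
proof -
  have "balanced tau (v @ word_inv tau v)"
    using balanced_insert_word[of tau "[]" "[]" "[]" v] by (simp add: balanced.Nil)
  then show ?thesis using balanced_insert_word[of tau "[]" v "word_inv tau v" u] by simp
qed

lemma (in involution) balanced_word_inv: "balanced tau s \<Longrightarrow> balanced tau (word_inv tau s)"
proof (induction rule: balanced.induct)
  case Nil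
  show ?case by (simp add: word_inv_def balanced.Nil)
next
  case (insert p q r a)
  then have "balanced tau (word_inv tau r @ a # word_inv tau q @ tau a # word_inv tau p)"
    using balanced.insert[of tau "word_inv tau r" "word_inv tau q" "word_inv tau p" a]
    by (simp add: word_inv_append)
  then show ?case by (simp add: word_inv_append word_inv_Cons)
qed

fun gamma_seq_seen :: "('a \<Rightarrow> 'a) \<Rightarrow> (nat \<Rightarrow> 'a) \<Rightarrow> nat set \<Rightarrow> nat list \<Rightarrow> 'a list" where
  "gamma_seq_seen tau lab S [] = []"
| "gamma_seq_seen tau lab S (x # xs) =
     (if x \<in> S then tau (lab x) else lab x) # gamma_seq_seen tau lab (insert x S) xs"

lemma gamma_seq_seen_conv_nth:
  "gamma_seq_seen tau lab S w =
     map (\<lambda>i. if w ! i \<in> S \<union> set (take i w) then tau (lab (w ! i)) else lab (w ! i))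
         [0..<length w]"
proof (induction w arbitrary: S)
  case (Cons x xs)
  then show ?case
    by (simp add: upt_conv_Cons map_Suc_upt[symmetric] del: upt_Suc)
qed simp

lemma gamma_seq_eq_seen: "gamma_seq tau lab w = gamma_seq_seen tau lab {} w"
  unfolding gamma_seq_def gamma_seq_seen_conv_nth by simp

lemma gamma_seq_seen_append:
  "gamma_seq_seen tau lab S (xs @ ys) =
     gamma_seq_seen tau lab S xs @ gamma_seq_seen tau lab (S \<union> set xs) ys"
  by (induction xs arbitrary: S) auto

lemma length_gamma_seq_seen [simp]: "length (gamma_seq_seen tau lab S xs) = length xs"
  by (induction xs arbitrary: S) auto

lemma gamma_seq_seen_cong:
  "S \<inter> set xs = S' \<inter> set xs \<Longrightarrow> gamma_seq_seen tau lab S xs = gamma_seq_seen tau lab S' xs"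
proof (induction xs arbitrary: S S')
  case (Cons x xs)
  have "x \<in> S \<longleftrightarrow> x \<in> S'"
    using Cons.prems by auto
  moreover have "gamma_seq_seen tau lab (insert x S) xs = gamma_seq_seen tau lab (insert x S') xs"
    using Cons.prems by (intro Cons.IH) auto
  ultimately show ?case by simp
qed simp

lemma gamma_seq_seen_insert_notin:
  "x \<notin> set xs \<Longrightarrow> gamma_seq_seen tau lab (insert x S) xs = gamma_seq_seen tau lab S xs"
  by (rule gamma_seq_seen_cong) blast

lemma gamma_seq_seen_fun_upd_notin:
  "x \<notin> set xs \<Longrightarrow> gamma_seq_seen tau (lab(x := a)) S xs = gamma_seq_seen tau lab S xs"
  by (induction xs arbitrary: S) auto

lemma gamma_seq_seen_eq_appendD:
  assumes "gamma_seq_seen tau lab S w = s @ t"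
  obtains u v where "w = u @ v" "gamma_seq_seen tau lab S u = s"
    "gamma_seq_seen tau lab (S \<union> set u) v = t"
proof
  let ?u = "take (length s) w" and ?v = "drop (length s) w"
  show "w = ?u @ ?v" by simp
  have len: "length (gamma_seq_seen tau lab S ?u) = length s"
    using arg_cong[OF assms, of length] by simp
  have "gamma_seq_seen tau lab S ?u @ gamma_seq_seen tau lab (S \<union> set ?u) ?v = s @ t"
    using assms gamma_seq_seen_append[of tau lab S ?u ?v] by simp
  then show "gamma_seq_seen tau lab S ?u = s" "gamma_seq_seen tau lab (S \<union> set ?u) ?v = t"
    using append_eq_append_conv[OF disjI1[OF len]] by blast+
qed

lemma is_nanoword_insert_fresh:
  assumes "is_nanoword (u @ v @ w)" "x \<notin> set (u @ v @ w)"
  shows "is_nanoword (u @ x # v @ x # w)"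
  unfolding is_nanoword_def
proof
  fix y assume "y \<in> set (u @ x # v @ x # w)"
  show "count_list (u @ x # v @ x # w) y = 2"
  proof (cases "y = x")
    case True
    with assms(2) show ?thesis by (simp add: count_list_0_iff)
  next
    case False
    with assms \<open>y \<in> _\<close> show ?thesis unfolding is_nanoword_def by auto
  qed
qed

lemma nanoword_split_first:
  assumes "is_nanoword (x # w)"
  obtains q r where "w = q @ x # r" "x \<notin> set q" "x \<notin> set r" "is_nanoword (q @ r)"
proof -
  have "count_list w x = 1" using assms unfolding is_nanoword_def by auto
  then obtain q r where w: "w = q @ x # r" "x \<notin> set q"
    by (metis count_list_0_iff split_list_first zero_neq_one)
  with \<open>count_list w x = 1\<close> have "x \<notin> set r" by (simp add: count_list_0_iff)
  moreover have "is_nanoword (q @ r)"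
    unfolding is_nanoword_def
  proof
    fix y assume "y \<in> set (q @ r)"
    with w \<open>x \<notin> set r\<close> have "y \<noteq> x" "y \<in> set (x # w)" by auto
    with assms have "count_list (x # w) y = 2" unfolding is_nanoword_def by blast
    with \<open>y \<noteq> x\<close> show "count_list (q @ r) y = 2" unfolding w by simp
  qed
  ultimately show ?thesis using w that by blast
qed

lemma balanced_gamma_seq_seen:
  "is_nanoword w \<Longrightarrow> balanced tau (gamma_seq_seen tau lab {} w)"
proof (induction "length w" arbitrary: w rule: less_induct)
  case less
  show ?case
  proof (cases w)
    case Nil
    then show ?thesis by (simp add: balanced.Nil)
  next
    case (Cons x w')
    with less.prems obtain q r
      where w': "w' = q @ x # r" "x \<notin> set q" "x \<notin> set r" "is_nanoword (q @ r)"
      by (blast elim: nanoword_split_first)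
    with less.hyps Cons have "balanced tau (gamma_seq_seen tau lab {} (q @ r))" by simp
    then have "balanced tau ([] @ lab x # gamma_seq_seen tau lab {} q @
        tau (lab x) # gamma_seq_seen tau lab (set q) r)"
      by (intro balanced.insert) (simp add: gamma_seq_seen_append)
    with Cons w' show ?thesis
      by (simp add: gamma_seq_seen_append gamma_seq_seen_insert_notin)
  qed
qed

lemma balanced_imp_gamma_seq_seen:
  "balanced tau s \<Longrightarrow> \<exists>lab w. is_nanoword w \<and> gamma_seq_seen tau lab {} w = s"
proof (induction rule: balanced.induct)
  case Nil
  have "is_nanoword []" by (simp add: is_nanoword_def)
  then show ?case by force
next
  case (insert p q r a)
  then obtain lab w where w: "is_nanoword w" "gamma_seq_seen tau lab {} w = p @ q @ r"
    by blast
  then obtain wp wq wr where split: "w = wp @ wq @ wr" "gamma_seq_seen tau lab {} wp = p"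
    "gamma_seq_seen tau lab (set wp) wq = q" "gamma_seq_seen tau lab (set wp \<union> set wq) wr = r"
    by (auto elim!: gamma_seq_seen_eq_appendD)
  obtain x :: nat where x: "x \<notin> set w"
    using ex_new_if_finite[OF infinite_UNIV_nat finite_set] by blast
  with w(1) split(1) have "is_nanoword (wp @ x # wq @ x # wr)"
    by (intro is_nanoword_insert_fresh) auto
  moreover have "gamma_seq_seen tau (lab(x := a)) {} (wp @ x # wq @ x # wr) = p @ a # q @ tau a # r"
    using x split
    by (simp add: gamma_seq_seen_append gamma_seq_seen_insert_notin gamma_seq_seen_fun_upd_notin)
  ultimately show ?case by blast
qed

lemma gamma_image_eq_balanced_classes:
  "{gamma tau lab w | lab w. is_nanoword w} = pi_class tau ` {s. balanced tau s}"
  unfolding gamma_def pi_class_def gamma_seq_eq_seen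
  using balanced_gamma_seq_seen balanced_imp_gamma_seq_seen by blast

lemma (in group) insert_conj_in_derived:
  assumes "p \<in> carrier G" "a \<in> carrier G" "q \<in> carrier G" "r \<in> carrier G"
    and "p \<otimes> q \<otimes> r \<in> derived G (carrier G)"
  shows "p \<otimes> a \<otimes> q \<otimes> inv a \<otimes> r \<in> derived G (carrier G)"
proof -
  interpret D: normal "derived G (carrier G)" G by (rule derived_self_is_normal)
  have comm: "a \<otimes> q \<otimes> inv a \<otimes> inv q \<in> derived G (carrier G)"
    using assms(2,3) unfolding derived_def by (blast intro: generate.incl)
  have "p \<otimes> (a \<otimes> q \<otimes> inv a \<otimes> inv q) \<otimes> inv p \<otimes> (p \<otimes> q \<otimes> r) \<in> derived G (carrier G)"
    using assms(1) comm assms(5) by (rule D.m_closed[OF D.inv_op_closed2])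
  also have "p \<otimes> (a \<otimes> q \<otimes> inv a \<otimes> inv q) \<otimes> inv p \<otimes> (p \<otimes> q \<otimes> r) = p \<otimes> a \<otimes> q \<otimes> inv a \<otimes> r"
    using assms(1-4) by (simp add: m_assoc inv_solve_left')
  finally show ?thesis .
qed

context involution
begin

lemma balanced_classes_subset_derived:
  "pi_class tau ` {s. balanced tau s} \<subseteq> derived (Pi_grp tau) (carrier (Pi_grp tau))"
proof clarify
  interpret G: group "Pi_grp tau" by (rule group_Pi_grp)
  have carrier: "pi_class tau s \<in> carrier (Pi_grp tau)" for s
    by (simp add: carrier_Pi_grp)
  fix s assume "balanced tau s"
  then show "pi_class tau s \<in> derived (Pi_grp tau) (carrier (Pi_grp tau))"
  proof (induction rule: balanced.induct)
    case Nil
    show ?case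
      using subgroup.one_closed[OF G.derived_is_subgroup[OF subset_refl]] by (simp add: one_Pi_grp)
  next
    case (insert p q r a)
    let ?c = "pi_class tau"
    have "?c (p @ a # q @ tau a # r) =
        ?c p \<otimes>\<^bsub>Pi_grp tau\<^esub> ?c [a] \<otimes>\<^bsub>Pi_grp tau\<^esub> ?c q \<otimes>\<^bsub>Pi_grp tau\<^esub>
        inv\<^bsub>Pi_grp tau\<^esub> ?c [a] \<otimes>\<^bsub>Pi_grp tau\<^esub> ?c r"
      by (simp add: mult_Pi_grp inv_Pi_grp word_inv_def)
    moreover have "?c (p @ q @ r) = ?c p \<otimes>\<^bsub>Pi_grp tau\<^esub> ?c q \<otimes>\<^bsub>Pi_grp tau\<^esub> ?c r"
      by (simp add: mult_Pi_grp)
    ultimately show ?case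
      using insert.IH by (simp add: G.insert_conj_in_derived carrier)
  qed
qed

lemma subgroup_balanced_classes: "subgroup (pi_class tau ` {s. balanced tau s}) (Pi_grp tau)"
proof -
  interpret G: group "Pi_grp tau" by (rule group_Pi_grp)
  show ?thesis
  proof (rule G.subgroupI)
    show "pi_class tau ` {s. balanced tau s} \<subseteq> carrier (Pi_grp tau)"
      by (auto simp: carrier_Pi_grp)
    show "pi_class tau ` {s. balanced tau s} \<noteq> {}"
      using balanced.Nil by blast
  qed (auto simp: inv_Pi_grp mult_Pi_grp intro: balanced_word_inv balanced_append)
qed

lemma derived_subset_balanced_classes:
  "derived (Pi_grp tau) (carrier (Pi_grp tau)) \<subseteq> pi_class tau ` {s. balanced tau s}"
  unfolding derived_def
proof (rule group.generate_subgroup_incl[OF group_Pi_grp _ subgroup_balanced_classes])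
  show "derived_set (Pi_grp tau) (carrier (Pi_grp tau)) \<subseteq> pi_class tau ` {s. balanced tau s}"
    by (auto simp: carrier_Pi_grp mult_Pi_grp inv_Pi_grp intro: balanced_commutator)
qed

end

theorem lemma4p1:
  fixes tau :: "'a \<Rightarrow> 'a"
  assumes "\<forall>a. tau (tau a) = a"
  shows "{gamma tau lab w | lab w. is_nanoword w} = derived (Pi_grp tau) (carrier (Pi_grp tau))"
proof -
  interpret involution tau
    using assms by unfold_locales blast
  show ?thesis
    unfolding gamma_image_eq_balanced_classes
    using balanced_classes_subset_derived derived_subset_balanced_classes by (rule equalityI)
qed

end
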